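(* For all $X,Y\in{\sf Frm_2}$: if the sequent $\Rightarrow X\vee Y$ (empty antecedent) is derivable in ${\sf GWF^s_{N_2}}$, then $\Rightarrow X$ is derivable in ${\sf GWF^s_{N_2}}$ or $\Rightarrow Y$ is derivable in ${\sf GWF^s_{N_2}}$.
   Context: Language: countably many atoms $p,q,\dots$, the constant $\bot$, and binary connectives $\wedge,\vee,\rightarrow$ ($\rightarrow$ is strict implication). ${\sf Frm}$ is the set of formulas built from atoms and $\bot$ with $\wedge,\vee,\rightarrow$; $A,B,C,D$ range over ${\sf Frm}$. Let $\supset$ be a new binary symbol (material implication) and ${\sf Frm_1}={\sf Frm}\cup\{A\supset B : A,B\in{\sf Frm}\}$ (no nesting of $\supset$). ${\sf Frm_2}$ is the smallest set containing ${\sf Frm_1}$ and closed under $\wedge$ and $\vee$; $X,Y,Z$ range over ${\sf Frm_2}$. A single-succedent sequent is $\Gamma\Rightarrow Z$ with $\Gamma$ a finite multiset of ${\sf Frm_2}$-formulas and $Z\in{\sf Frm_2}$. The calculus ${\sf GWF^s_{N_2}}$ has initial sequents $(id^s)$ $p,\Gamma\Rightarrow p$ ($p$ an atom) and $(L^s_\bot)$ $\bot,\Gamma\Rightarrow Z$, and rules (premises / conclusion): $(L^s_\wedge)$ $X,Y,\Gamma\Rightarrow Z$ / $X\wedge Y,\Gamma\Rightarrow Z$; $(R^s_\wedge)$ $\Gamma\Rightarrow X$ and $\Gamma\Rightarrow Y$ / $\Gamma\Rightarrow X\wedge Y$; $(L^s_\vee)$ $X,\Gamma\Rightarrow Z$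 and $Y,\Gamma\Rightarrow Z$ / $X\vee Y,\Gamma\Rightarrow Z$; $(R^s_{\vee_l})$ $\Gamma\Rightarrow X$ / $\Gamma\Rightarrow X\vee Y$; $(R^s_{\vee_r})$ $\Gamma\Rightarrow Y$ / $\Gamma\Rightarrow X\vee Y$; $(L^s_\supset)$ $A\supset B,\Gamma\Rightarrow A$ and $B,\Gamma\Rightarrow Z$ / $A\supset B,\Gamma\Rightarrow Z$; $(R^s_\supset)$ $A,\Gamma\Rightarrow B$ / $\Gamma\Rightarrow A\supset B$; $(LR^s_\rightarrow)$ $C\supset D,A\Rightarrow B$ / $\Gamma,C\rightarrow D\Rightarrow A\rightarrow B$; $(R^s_\rightarrow)$ $A\Rightarrow B$ / $\Gamma\Rightarrow A\rightarrow B$. Here $A,B,C,D\in{\sf Frm}$, $X,Y,Z\in{\sf Frm_2}$, $\Gamma$ an arbitrary finite multiset of ${\sf Frm_2}$-formulas. *)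

theory Defs
  imports Main "HOL-Library.Multiset"
begin

text \<open>The sets Frm and Frm2 are carved out by predicates,
  so that e.g. a Frm conjunction is literally the same object as the
  corresponding Frm2 conjunction.\<close>
datatype fm =
    Atom nat
  | Bot
  | Conj fm fm
  | Disj fm fm
  | SImp fm fm
  | MImp fm fm

fun is_frm :: "fm \<Rightarrow> bool" where
  "is_frm (Atom p) = True"
| "is_frm Bot = True"
| "is_frm (Conj A B) = (is_frm A \<and> is_frm B)"
| "is_frm (Disj A B) = (is_frm A \<and> is_frm B)"
| "is_frm (SImp A B) = (is_frm A \<and> is_frm B)"
| "is_frm (MImp A B) = False"

inductive is_frm2 :: "fm \<Rightarrow> bool" where
  frm: "is_frm A \<Longrightarrow> is_frm2 A"
| mimp: "is_frm A \<Longrightarrow> is_frm B \<Longrightarrow> is_frm2 (MImp A B)"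
| conj: "is_frm2 X \<Longrightarrow> is_frm2 Y \<Longrightarrow> is_frm2 (Conj X Y)"
| disj: "is_frm2 X \<Longrightarrow> is_frm2 Y \<Longrightarrow> is_frm2 (Disj X Y)"

definition frm2_ms :: "fm multiset \<Rightarrow> bool" where
  "frm2_ms \<Gamma> = (\<forall>X\<in>#\<Gamma>. is_frm2 X)"

inductive gwf :: "fm multiset \<Rightarrow> fm \<Rightarrow> bool" where
  id: "frm2_ms \<Gamma> \<Longrightarrow> gwf (add_mset (Atom p) \<Gamma>) (Atom p)"
| LBot: "frm2_ms \<Gamma> \<Longrightarrow> is_frm2 Z \<Longrightarrow> gwf (add_mset Bot \<Gamma>) Z"
| LConj: "is_frm2 X \<Longrightarrow> is_frm2 Y \<Longrightarrow>
    gwf (add_mset X (add_mset Y \<Gamma>)) Z \<Longrightarrow> gwf (add_mset (Conj X Y) \<Gamma>) Z"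
| RConj: "gwf \<Gamma> X \<Longrightarrow> gwf \<Gamma> Y \<Longrightarrow> gwf \<Gamma> (Conj X Y)"
| LDisj: "is_frm2 X \<Longrightarrow> is_frm2 Y \<Longrightarrow>
    gwf (add_mset X \<Gamma>) Z \<Longrightarrow> gwf (add_mset Y \<Gamma>) Z \<Longrightarrow> gwf (add_mset (Disj X Y) \<Gamma>) Z"
| RDisjL: "is_frm2 Y \<Longrightarrow> gwf \<Gamma> X \<Longrightarrow> gwf \<Gamma> (Disj X Y)"
| RDisjR: "is_frm2 X \<Longrightarrow> gwf \<Gamma> Y \<Longrightarrow> gwf \<Gamma> (Disj X Y)"
| LMImp: "is_frm A \<Longrightarrow> is_frm B \<Longrightarrow>
    gwf (add_mset (MImp A B) \<Gamma>) A \<Longrightarrow> gwf (add_mset B \<Gamma>) Z \<Longrightarrow>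
    gwf (add_mset (MImp A B) \<Gamma>) Z"
| RMImp: "is_frm A \<Longrightarrow> is_frm B \<Longrightarrow>
    gwf (add_mset A \<Gamma>) B \<Longrightarrow> gwf \<Gamma> (MImp A B)"
| LRSImp: "is_frm A \<Longrightarrow> is_frm B \<Longrightarrow> is_frm C \<Longrightarrow> is_frm D \<Longrightarrow> frm2_ms \<Gamma> \<Longrightarrow>
    gwf {# MImp C D, A #} B \<Longrightarrow> gwf (add_mset (SImp C D) \<Gamma>) (SImp A B)"
| RSImp: "is_frm A \<Longrightarrow> is_frm B \<Longrightarrow> frm2_ms \<Gamma> \<Longrightarrow>
    gwf {# A #} B \<Longrightarrow> gwf \<Gamma> (SImp A B)"

end

theory Submission
  imports Defs
begin

theorem corollary5p4:
  assumes "is_frm2 X" and "is_frm2 Y"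
    and "gwf {#} (Disj X Y)"
  shows "gwf {#} X \<or> gwf {#} Y"
  \<comment> \<open>The calculus is cut-free and every left rule has a nonempty antecedent,
    so only the two right disjunction rules can end the derivation.\<close>
  using assms(3)
proof (cases rule: gwf.cases)
  case RDisjL
  then show ?thesis by simp
next
  case RDisjR
  then show ?thesis by simp
qed simp_all

end
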